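(* Under the assumptions of the context, there exist a neighborhood $U$ of $\bar\xi$ and $\varepsilon>0$ such that for every $\xi\in U$ there is $j\in\{1,2,3\}$ with \[ \varepsilon^{-1}|\nu_j(\xi)|\ge\alpha(\xi), \] where $\nu_1(\xi),\nu_2(\xi),\nu_3(\xi)$ are the (complex) roots in $t$ of $t^3+a_1(\xi)t^2+a_2(\xi)t+a_3(\xi)=0$.
   Context: Let $a(t,\xi),b(t,\xi)$ be real-valued $C^\infty$ functions on $(-c,T)\times(\mathbb R^n\setminus\{0\})$, homogeneous of degree $0$ in $\xi$, with $\Delta:=4a^3-27b^2\ge0$ for $t\in[0,T)$. Let $|\bar\xi|=1$ with $a(0,\bar\xi)=0$, $\partial_ta(0,\bar\xi)\ne0$. Near $(0,\bar\xi)$ write $a(t,\xi)=e_1(t,\xi)(t+\alpha(\xi))$ with $e_1>0$ smooth and $\alpha$ smooth, $\alpha(\bar\xi)=0$, $\alpha\ge0$ near $\bar\xi$, and $\Delta(t,\xi)=e_2(t,\xi)\{t^3+a_1(\xi)t^2+a_2(\xi)t+a_3(\xi)\}$ with $e_2>0$ smooth and $a_j$ smooth real-valued, $a_j(\bar\xi)=0$. *)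

theory Defs
  imports "HOL-Analysis.Analysis"
begin

fun Ck_on :: "nat \<Rightarrow> 'a::euclidean_space set \<Rightarrow> ('a \<Rightarrow> real) \<Rightarrow> bool" where
  "Ck_on 0 S f = continuous_on S f"
| "Ck_on (Suc k) S f =
     (\<exists>f'. (\<forall>x\<in>S. (f has_derivative f' x) (at x)) \<and> (\<forall>v. Ck_on k S (\<lambda>x. f' x v)))"

definition C_inf_on :: "'a::euclidean_space set \<Rightarrow> ('a \<Rightarrow> real) \<Rightarrow> bool" where
  "C_inf_on S f \<longleftrightarrow> (\<forall>k. Ck_on k S f)"

end

theory Submission
  imports Defs "HOL-Computational_Algebra.Fundamental_Theorem_Algebra"
begin

text \<open>Suppose every root of the cubic satisfied 1000 |\<nu>| < \<alpha>(\<xi>) =: l. Then on [-l, 0] the cubic is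
  t^3 up to an error of order l^3/1000. Along \<xi> = \<xi>0 the two factorisations give
  27 b^2 = (4 e1^3 - e2) t^3, so the continuous factor 4 e1^3 - e2 vanishes at (0, \<xi>0); writing E for
  the common value 4 e1^3 = e2 there, near (0, \<xi>0) one gets 27 b^2 \<approx> E ((t + l)^3 - t^3) for -l \<le> t \<le> 0.
  Hence b(-l), -2 b(-l/2) and b(0) all have modulus close to (E l^3 / 27)^(1/2), and three such
  numbers cannot cancel: the second difference b(-l) - 2 b(-l/2) + b(0) is of order l^(3/2). But b is
  C^2 in t, so that second difference is O(l^2), which is impossible once l is small, i.e. for \<xi>
  close to \<xi>0.\<close>

lemma cubic_vieta:
  fixes A B C :: complex
  obtains r1 r2 r3 where "r1 + r2 + r3 = - A" "r1*r2 + r1*r3 + r2*r3 = B" "r1*r2*r3 = - C"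
proof -
  obtain r1 where "poly [:C, B, A, 1:] r1 = 0"
    using fundamental_theorem_of_algebra_alt[of "[:C, B, A, 1:]"] by auto
  then have r1: "C + r1 * (B + r1 * (A + r1)) = 0"
    by simp
  define p where "p = A + r1"
  define q where "q = B + r1 * p"
  \<comment> \<open>the remaining two roots solve the quadratic z^2 + p z + q\<close>
  define r2 where "r2 = (- p + csqrt (p^2 - 4*q)) / 2"
  define r3 where "r3 = - p - r2"
  have prod: "r2 * r3 = q"
    using power2_csqrt[of "p^2 - 4*q"] unfolding r3_def r2_def
    by (simp add: field_simps power2_eq_square)
  have sum: "r2 + r3 = - p"
    by (simp add: r3_def)
  show thesis
  proof (rule that)
    have "r1 + r2 + r3 = r1 + (r2 + r3)"
      by (rule add.assoc)
    then show "r1 + r2 + r3 = - A"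
      using sum by (simp add: p_def)
    have "r1*r2 + r1*r3 + r2*r3 = r1 * (r2 + r3) + r2 * r3"
      by (simp add: algebra_simps)
    then show "r1*r2 + r1*r3 + r2*r3 = B"
      using sum prod by (simp add: p_def q_def algebra_simps)
    have "r1*r2*r3 = r1 * (r2 * r3)"
      by (simp add: algebra_simps)
    then show "r1*r2*r3 = - C"
      using prod r1 by (simp add: p_def q_def algebra_simps eq_neg_iff_add_eq_0)
  qed
qed

lemma vieta_root:
  fixes A B C r1 r2 r3 r :: complex
  assumes "r1 + r2 + r3 = - A" "r1*r2 + r1*r3 + r2*r3 = B" "r1*r2*r3 = - C"
    and "r \<in> {r1, r2, r3}"
  shows "r^3 + A * r^2 + B * r + C = 0"
proof -
  have A: "A = - (r1 + r2 + r3)" and C: "C = - (r1 * r2 * r3)"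
    using assms(1,3) by simp_all
  have "r^3 + A * r^2 + B * r + C = (r - r1) * (r - r2) * (r - r3)"
    unfolding A C assms(2) [symmetric] by algebra
  then show ?thesis
    using assms(4) by auto
qed

lemma vieta_coeff_bounds:
  fixes a1 a2 a3 m :: real and r1 r2 r3 :: complex
  assumes "r1 + r2 + r3 = - of_real a1" "r1*r2 + r1*r3 + r2*r3 = of_real a2" "r1*r2*r3 = - of_real a3"
    and "cmod r1 \<le> m" "cmod r2 \<le> m" "cmod r3 \<le> m"
  shows "\<bar>a1\<bar> \<le> 3*m" "\<bar>a2\<bar> \<le> 3*m^2" "\<bar>a3\<bar> \<le> m^3"
proof -
  have m: "0 \<le> m"
    using assms(4) norm_ge_zero order_trans by blast
  have "\<bar>a1\<bar> = cmod (r1 + r2 + r3)"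
    using assms(1) by (simp add: norm_minus_cancel)
  also have "\<dots> \<le> cmod r1 + cmod r2 + cmod r3"
    by (meson add_mono norm_triangle_ineq order_refl order_trans)
  finally show "\<bar>a1\<bar> \<le> 3*m"
    using assms(4-6) by linarith
  have prod: "cmod (u * v) \<le> m^2" if "cmod u \<le> m" "cmod v \<le> m" for u v :: complex
    using that m by (simp add: norm_mult power2_eq_square mult_mono)
  have "\<bar>a2\<bar> = cmod (r1*r2 + r1*r3 + r2*r3)"
    using assms(2) by simp
  also have "\<dots> \<le> cmod (r1*r2) + cmod (r1*r3) + cmod (r2*r3)"
    by (meson add_mono norm_triangle_ineq order_refl order_trans)
  finally show "\<bar>a2\<bar> \<le> 3*m^2"
    using prod[OF assms(4,5)] prod[OF assms(4,6)] prod[OF assms(5,6)] by linarith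
  have "\<bar>a3\<bar> = cmod (r1*r2*r3)"
    using assms(3) by (simp add: norm_minus_cancel)
  also have "\<dots> = cmod r1 * cmod r2 * cmod r3"
    by (simp add: norm_mult)
  also have "\<dots> \<le> m * m * m"
    using assms(4-6) by (intro mult_mono) (auto simp: m)
  finally show "\<bar>a3\<bar> \<le> m^3"
    by (simp add: power3_eq_cube)
qed

lemma vieta_lower_terms_bound:
  fixes a1 a2 a3 m R t :: real and r1 r2 r3 :: complex
  assumes "r1 + r2 + r3 = - of_real a1" "r1*r2 + r1*r3 + r2*r3 = of_real a2" "r1*r2*r3 = - of_real a3"
    and "cmod r1 \<le> m" "cmod r2 \<le> m" "cmod r3 \<le> m" and "\<bar>t\<bar> \<le> R"
  shows "\<bar>a1*t^2 + a2*t + a3\<bar> \<le> 3*m*R^2 + 3*m^2*R + m^3"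
proof -
  note coeff = vieta_coeff_bounds[OF assms(1-6)]
  have t2: "t^2 \<le> R^2"
    using assms(7) by (metis abs_ge_zero power2_abs power_mono)
  have "\<bar>a1*t^2\<bar> \<le> 3*m*R^2"
    unfolding abs_mult using coeff(1) t2 by (intro mult_mono) auto
  moreover have "\<bar>a2*t\<bar> \<le> 3*m^2*R"
    unfolding abs_mult using coeff(2) assms(7) by (intro mult_mono) auto
  moreover have "\<bar>a1*t^2 + a2*t + a3\<bar> \<le> \<bar>a1*t^2\<bar> + \<bar>a2*t\<bar> + \<bar>a3\<bar>"
    by (meson abs_triangle_ineq add_mono order_refl order_trans)
  ultimately show ?thesis
    using coeff(3) by linarith
qed

lemma second_difference_bound:
  fixes g g' g'' :: "real \<Rightarrow> real"
  assumes h: "h > 0"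
    and g': "\<And>t. x - h \<le> t \<Longrightarrow> t \<le> x + h \<Longrightarrow> (g has_real_derivative g' t) (at t)"
    and g'': "\<And>t. x - h \<le> t \<Longrightarrow> t \<le> x + h \<Longrightarrow> (g' has_real_derivative g'' t) (at t)"
    and M: "\<And>t. x - h \<le> t \<Longrightarrow> t \<le> x + h \<Longrightarrow> \<bar>g'' t\<bar> \<le> M"
  shows "\<bar>g (x - h) - 2 * g x + g (x + h)\<bar> \<le> M * h^2"
proof -
  define D where "D = (\<lambda>m::nat. if m = 0 then g else if m = 1 then g' else g'')"
  have D: "\<forall>m t. m < 2 \<and> x - h \<le> t \<and> t \<le> x + h \<longrightarrow> (D m has_real_derivative D (Suc m) t) (at t)"
    using g' g'' by (auto simp: D_def less_2_cases_iff)
  obtain t1 where t1: "x - h < t1" "t1 < x"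
    and taylor1: "g (x - h) = (\<Sum>m<2. D m x / fact m * (- h)^m) + D 2 t1 / fact 2 * (- h)^2"
    using Taylor[of 2 D g "x - h" "x + h" x "x - h"] D h by (auto simp: D_def)
  obtain t2 where t2: "x < t2" "t2 < x + h"
    and taylor2: "g (x + h) = (\<Sum>m<2. D m x / fact m * h^m) + D 2 t2 / fact 2 * h^2"
    using Taylor[of 2 D g "x - h" "x + h" x "x + h"] D h by (auto simp: D_def)
  have "2 * (g (x - h) - 2 * g x + g (x + h)) = (g'' t1 + g'' t2) * h^2"
    using taylor1 taylor2 by (simp add: D_def numeral_2_eq_2 lessThan_Suc field_simps)
  then have "2 * \<bar>g (x - h) - 2 * g x + g (x + h)\<bar> = \<bar>g'' t1 + g'' t2\<bar> * h^2"
    by (metis abs_mult abs_power2 abs_numeral)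
  moreover have "\<bar>g'' t1 + g'' t2\<bar> * h^2 \<le> (2 * M) * h^2"
    using M[of t1] M[of t2] t1 t2 by (intro mult_right_mono) auto
  ultimately show ?thesis
    by (simp add: mult.assoc)
qed

lemma has_derivative_imp_partial_fst:
  fixes F :: "real \<times> 'b::real_normed_vector \<Rightarrow> real"
  assumes "(F has_derivative F') (at (t, x))"
  shows "((\<lambda>s. F (s, x)) has_real_derivative F' (1, 0)) (at t)"
proof -
  have "((\<lambda>s. (s, x)) has_derivative (\<lambda>h. (h, 0))) (at t)"
    by (auto intro!: derivative_eq_intros)
  from has_derivative_compose[OF this assms]
  have "((\<lambda>s. F (s, x)) has_derivative (\<lambda>h. F' (h, 0))) (at t)"
    by simp
  moreover have "(\<lambda>h. F' (h, 0)) = (*) (F' (1, 0))"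
  proof
    fix h :: real
    have "F' (h *\<^sub>R (1, 0)) = h *\<^sub>R F' (1, 0)"
      by (rule linear_cmul[OF has_derivative_linear[OF assms]])
    then show "F' (h, 0) = F' (1, 0) * h"
      by simp
  qed
  ultimately show ?thesis
    unfolding has_field_derivative_def by simp
qed

lemma abs_bounds_of_square_near:
  fixes x K :: real
  assumes "\<bar>x^2 - K\<bar> \<le> K/10"
  shows "9/10 * sqrt K \<le> \<bar>x\<bar>" "\<bar>x\<bar> \<le> 11/10 * sqrt K"
proof -
  have K: "K \<ge> 0" and x2: "81/100 * K \<le> x^2" "x^2 \<le> 121/100 * K"
    using assms unfolding abs_le_iff by linarith+
  have "(9/10 * sqrt K)^2 = 81/100 * K" "(11/10 * sqrt K)^2 = 121/100 * K"
    using K by (simp_all add: power_mult_distrib power_divide)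
  then have "\<bar>9/10 * sqrt K\<bar> \<le> \<bar>x\<bar>" "\<bar>x\<bar> \<le> \<bar>11/10 * sqrt K\<bar>"
    unfolding abs_le_square_iff using x2 by linarith+
  then show "9/10 * sqrt K \<le> \<bar>x\<bar>" "\<bar>x\<bar> \<le> 11/10 * sqrt K"
    using K by simp_all
qed

lemma sum3_square_lower_bound:
  fixes x y z K :: real
  assumes "\<bar>x^2 - K\<bar> \<le> K/10" "\<bar>y^2 - K\<bar> \<le> K/10" "\<bar>z^2 - K\<bar> \<le> K/10"
  shows "49/100 * K \<le> (x + y + z)^2"
proof -
  note x = abs_bounds_of_square_near[OF assms(1)]
    and y = abs_bounds_of_square_near[OF assms(2)]
    and z = abs_bounds_of_square_near[OF assms(3)]
  \<comment> \<open>an odd number of terms of nearly equal size cannot cancel\<close>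
  have "\<bar>7/10 * sqrt K\<bar> \<le> \<bar>x + y + z\<bar>"
    using x y z by (auto simp: abs_if split: if_split_asm)
  then have "(7/10 * sqrt K)^2 \<le> (x + y + z)^2"
    by (simp only: abs_le_square_iff)
  moreover have "(7/10 * sqrt K)^2 = 49/100 * K"
    using order_trans[OF abs_ge_zero assms(1)] by (simp add: power_mult_distrib power_divide)
  ultimately show ?thesis
    by simp
qed

lemma cube_sum_lower_bound:
  fixes u v :: real
  assumes "u \<ge> 0" "v \<ge> 0"
  shows "(u + v)^3 \<le> 4 * (u^3 + v^3)"
proof -
  have "4 * (u^3 + v^3) - (u + v)^3 = 3 * (u + v) * (u - v)^2"
    by (simp add: algebra_simps power2_eq_square power3_eq_cube)
  also have "\<dots> \<ge> 0"
    using assms by simp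
  finally show ?thesis
    by simp
qed

lemma discriminant_profile_estimate:
  fixes Y P Q er E l t :: real
  assumes t: "- l \<le> t" "t \<le> 0" and E: "E > 0"
    and Y: "27 * Y = 4 * P * (t + l)^3 - Q * (t^3 + er)"
    and P: "\<bar>P - E/4\<bar> \<le> E/80" and Q: "\<bar>Q - E\<bar> \<le> E/20"
    and er: "\<bar>er\<bar> \<le> 7/1000 * l^3"
  shows "\<bar>Y - E/27 * ((t + l)^3 - t^3)\<bar> \<le> E/270 * ((t + l)^3 - t^3)"
proof -
  define u v w where "u = t + l" and "v = - t" and "w = u^3 + v^3"
  have uv: "u \<ge> 0" "v \<ge> 0"
    using t by (simp_all add: u_def v_def)
  have D: "(t + l)^3 - t^3 = w"
    by (simp add: u_def v_def w_def)
  have l3: "l^3 \<le> 4 * w"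
    using cube_sum_lower_bound[OF uv] by (simp add: u_def v_def w_def)
  have P': "\<bar>4 * P - E\<bar> \<le> E/20" and Q': "\<bar>Q\<bar> \<le> 21/20 * E"
    using P Q E unfolding abs_le_iff by linarith+
  have "\<bar>27 * Y - E * w\<bar> = \<bar>(4 * P - E) * u^3 + (Q - E) * v^3 - Q * er\<bar>"
    using Y by (simp add: u_def v_def w_def algebra_simps)
  also have "\<dots> \<le> \<bar>(4 * P - E) * u^3\<bar> + \<bar>(Q - E) * v^3\<bar> + \<bar>Q * er\<bar>"
    by (rule order_trans[OF abs_triangle_ineq4 add_right_mono[OF abs_triangle_ineq]])
  also have "\<dots> = \<bar>4 * P - E\<bar> * u^3 + \<bar>Q - E\<bar> * v^3 + \<bar>Q\<bar> * \<bar>er\<bar>"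
    using uv by (simp add: abs_mult)
  also have "\<dots> \<le> E/20 * u^3 + E/20 * v^3 + 21/20 * E * (7/1000 * (4 * w))"
    using P' Q Q' er l3 uv E t
    by (intro add_mono mult_right_mono mult_mono order_trans[OF er]) auto
  also have "\<dots> = 397/5000 * (E * w)"
    by (simp add: w_def algebra_simps)
  also have "\<dots> \<le> E * w / 10"
    using E uv by (simp add: w_def)
  finally have "\<bar>27 * Y - E * w\<bar> \<le> E * w / 10" .
  moreover have "\<bar>27 * Y - E * w\<bar> = 27 * \<bar>Y - E/27 * w\<bar>"
  proof -
    have "27 * Y - E * w = 27 * (Y - E/27 * w)"
      by simp
    then show ?thesis
      by (simp only: abs_mult abs_numeral)
  qed
  ultimately show ?thesis
    unfolding D by simp
qed

lemma second_difference_lower_bound: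
  fixes \<beta> P Q er :: "real \<Rightarrow> real" and l E :: real
  assumes l: "l > 0" and E: "E > 0"
    and \<beta>: "\<And>t. - l \<le> t \<Longrightarrow> t \<le> 0 \<Longrightarrow> 27 * (\<beta> t)^2 = 4 * P t * (t + l)^3 - Q t * (t^3 + er t)"
    and P: "\<And>t. - l \<le> t \<Longrightarrow> t \<le> 0 \<Longrightarrow> \<bar>P t - E/4\<bar> \<le> E/80"
    and Q: "\<And>t. - l \<le> t \<Longrightarrow> t \<le> 0 \<Longrightarrow> \<bar>Q t - E\<bar> \<le> E/20"
    and er: "\<And>t. - l \<le> t \<Longrightarrow> t \<le> 0 \<Longrightarrow> \<bar>er t\<bar> \<le> 7/1000 * l^3"
  shows "49/100 * (E * l^3 / 27) \<le> (\<beta> (- l) - 2 * \<beta> (- l/2) + \<beta> 0)^2"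
proof -
  have est: "\<bar>(\<beta> t)^2 - E/27 * ((t + l)^3 - t^3)\<bar> \<le> E/270 * ((t + l)^3 - t^3)"
    if "- l \<le> t" "t \<le> 0" for t
    using discriminant_profile_estimate[OF that E \<beta>[OF that] P[OF that] Q[OF that] er[OF that]] .
  define K where "K = E * l^3 / 27"
  \<comment> \<open>at t = -l, -l/2, 0 the model profile (t + l)^3 - t^3 equals l^3, l^3/4, l^3\<close>
  have "\<bar>(\<beta> (- l))^2 - K\<bar> \<le> K/10"
    using est[of "- l"] l by (simp add: K_def)
  moreover have "\<bar>(- 2 * \<beta> (- l/2))^2 - K\<bar> \<le> K/10"
  proof -
    have "\<bar>(- 2 * \<beta> (- l/2))^2 - K\<bar> = \<bar>4 * ((\<beta> (- l/2))^2 - K/4)\<bar>"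
      by (simp add: power_mult_distrib algebra_simps)
    also have "\<dots> = 4 * \<bar>(\<beta> (- l/2))^2 - K/4\<bar>"
      by (simp only: abs_mult abs_numeral)
    finally have "\<bar>(- 2 * \<beta> (- l/2))^2 - K\<bar> = 4 * \<bar>(\<beta> (- l/2))^2 - K/4\<bar>" .
    then show ?thesis
      using est[of "- l/2"] l by (simp add: K_def power_divide)
  qed
  moreover have "\<bar>(\<beta> 0)^2 - K\<bar> \<le> K/10"
    using est[of 0] l by (simp add: K_def)
  ultimately show ?thesis
    using sum3_square_lower_bound unfolding K_def by fastforce
qed

lemma discriminant_forces_large_root:
  fixes \<beta> \<beta>' \<beta>'' P Q :: "real \<Rightarrow> real" and a1 a2 a3 l E M :: real
  assumes E: "E > 0" and l_small: "4 * M^2 * l < E"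
    and \<beta>': "\<And>t. - l \<le> t \<Longrightarrow> t \<le> 0 \<Longrightarrow> (\<beta> has_real_derivative \<beta>' t) (at t)"
    and \<beta>'': "\<And>t. - l \<le> t \<Longrightarrow> t \<le> 0 \<Longrightarrow> (\<beta>' has_real_derivative \<beta>'' t) (at t)"
    and M: "\<And>t. - l \<le> t \<Longrightarrow> t \<le> 0 \<Longrightarrow> \<bar>\<beta>'' t\<bar> \<le> M"
    and P: "\<And>t. - l \<le> t \<Longrightarrow> t \<le> 0 \<Longrightarrow> \<bar>P t - E/4\<bar> \<le> E/80"
    and Q: "\<And>t. - l \<le> t \<Longrightarrow> t \<le> 0 \<Longrightarrow> \<bar>Q t - E\<bar> \<le> E/20"
    and disc: "\<And>t. - l \<le> t \<Longrightarrow> t \<le> 0 \<Longrightarrow>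
      27 * (\<beta> t)^2 = 4 * P t * (t + l)^3 - Q t * (t^3 + (a1 * t^2 + a2 * t + a3))"
  shows "\<exists>\<nu>::complex. \<nu>^3 + of_real a1 * \<nu>^2 + of_real a2 * \<nu> + of_real a3 = 0 \<and> l \<le> 1000 * cmod \<nu>"
proof -
  obtain r1 r2 r3 :: complex where vieta: "r1 + r2 + r3 = - of_real a1" "r1*r2 + r1*r3 + r2*r3 = of_real a2"
    "r1*r2*r3 = - of_real a3"
    by (rule cubic_vieta)
  show ?thesis
  proof (rule ccontr)
    assume "\<not> ?thesis"
    then have small_roots: "1000 * cmod r < l" if "r \<in> {r1, r2, r3}" for r
      using vieta_root[OF vieta that] by force
    then have l: "l > 0"
      by (smt (verit) insertI1 norm_ge_zero)
    have roots: "cmod r1 \<le> l/1000" "cmod r2 \<le> l/1000" "cmod r3 \<le> l/1000"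
      using small_roots by fastforce+
    have er: "\<bar>a1 * t^2 + a2 * t + a3\<bar> \<le> 7/1000 * l^3" if "- l \<le> t" "t \<le> 0" for t
    proof -
      have "\<bar>a1 * t^2 + a2 * t + a3\<bar> \<le> 3 * (l/1000) * l^2 + 3 * (l/1000)^2 * l + (l/1000)^3"
        using vieta_lower_terms_bound[OF vieta roots] that by simp
      also have "\<dots> \<le> 7/1000 * l^3"
        using l by (simp add: power2_eq_square power3_eq_cube)
      finally show ?thesis .
    qed
    have "49/100 * (E * l^3 / 27) \<le> (\<beta> (- l) - 2 * \<beta> (- l/2) + \<beta> 0)^2"
      by (rule second_difference_lower_bound[OF l E disc P Q er])
    also have "\<dots> \<le> (M * (l/2)^2)^2"
    proof -
      have "\<bar>\<beta> (- l/2 - l/2) - 2 * \<beta> (- l/2) + \<beta> (- l/2 + l/2)\<bar> \<le> M * (l/2)^2"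
        using l by (intro second_difference_bound[where g' = \<beta>' and g'' = \<beta>''] \<beta>' \<beta>'' M) auto
      then have "\<bar>\<beta> (- l) - 2 * \<beta> (- l/2) + \<beta> 0\<bar>^2 \<le> (M * (l/2)^2)^2"
        by (intro power_mono) simp_all
      then show ?thesis
        by simp
    qed
    also have "\<dots> = l^3 * (M^2 * l) / 16"
      by (simp add: power_mult_distrib power_divide power2_eq_square power3_eq_cube)
    also have "\<dots> < l^3 * (E/4) / 16"
      using l l_small by (simp add: mult.commute)
    finally show False
      using E l by simp
  qed
qed

lemma Ck_on_subset: "Ck_on k S f \<Longrightarrow> T \<subseteq> S \<Longrightarrow> Ck_on k T f"
proof (induction k arbitrary: f)
  case 0
  then show ?case
    using continuous_on_subset by simp
next
  case (Suc k)
  then obtain f' where f': "\<forall>x\<in>S. (f has_derivative f' x) (at x)" "\<And>v. Ck_on k S (\<lambda>x. f' x v)"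
    by auto
  have "\<forall>x\<in>T. (f has_derivative f' x) (at x)"
    using f'(1) Suc.prems(2) by blast
  moreover have "Ck_on k T (\<lambda>x. f' x v)" for v
    using Suc.IH[OF f'(2) Suc.prems(2)] .
  ultimately show ?case
    by auto
qed

lemma C_inf_on_subset: "C_inf_on S f \<Longrightarrow> T \<subseteq> S \<Longrightarrow> C_inf_on T f"
  unfolding C_inf_on_def using Ck_on_subset by metis

lemma C_inf_on_imp_continuous_on: "C_inf_on S f \<Longrightarrow> continuous_on S f"
  unfolding C_inf_on_def by (metis Ck_on.simps(1))

lemma C_inf_on_second_partial_fst:
  fixes f :: "real \<Rightarrow> 'a::euclidean_space \<Rightarrow> real"
  assumes "C_inf_on S (\<lambda>(t, x). f t x)"
  obtains f' f'' where
    "\<And>t x. (t, x) \<in> S \<Longrightarrow> ((\<lambda>s. f s x) has_real_derivative f' t x) (at t)"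
    "\<And>t x. (t, x) \<in> S \<Longrightarrow> ((\<lambda>s. f' s x) has_real_derivative f'' t x) (at t)"
    "continuous_on S (\<lambda>(t, x). f'' t x)"
proof -
  have "Ck_on (Suc (Suc 0)) S (\<lambda>(t, x). f t x)"
    using assms unfolding C_inf_on_def by blast
  then obtain D1 where D1: "\<forall>z\<in>S. ((\<lambda>(t, x). f t x) has_derivative D1 z) (at z)"
    and D1_C1: "\<And>v. Ck_on (Suc 0) S (\<lambda>z. D1 z v)"
    by auto
  obtain D2 where D2: "\<forall>z\<in>S. ((\<lambda>z. D1 z (1, 0)) has_derivative D2 z) (at z)"
    and D2_cont: "\<And>w. continuous_on S (\<lambda>z. D2 z w)"
    using D1_C1[of "(1, 0)"] by auto
  show thesis
  proof
    show "((\<lambda>s. f s x) has_real_derivative D1 (t, x) (1, 0)) (at t)" if "(t, x) \<in> S" for t x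
      using has_derivative_imp_partial_fst[OF D1[rule_format, OF that]] by simp
    show "((\<lambda>s. D1 (s, x) (1, 0)) has_real_derivative D2 (t, x) (1, 0)) (at t)" if "(t, x) \<in> S" for t x
      using has_derivative_imp_partial_fst[OF D2[rule_format, OF that]] by simp
    show "continuous_on S (\<lambda>(t, x). D2 (t, x) (1, 0))"
      using D2_cont by (simp add: case_prod_beta')
  qed
qed

lemma isCont_vanishes_if_nonneg_mult_cube:
  fixes f :: "real \<Rightarrow> real"
  assumes cont: "isCont f 0" and sign: "\<forall>\<^sub>F t in at 0. 0 \<le> f t * t^3"
  shows "f 0 = 0"
proof -
  have right: "(f \<longlongrightarrow> f 0) (at_right 0)" and left: "(f \<longlongrightarrow> f 0) (at_left 0)"
    using cont unfolding isCont_def filterlim_at_split by auto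
  have "\<forall>\<^sub>F t in at_right 0. 0 \<le> f t"
    using eventually_at_split[THEN iffD1, OF sign, THEN conjunct2] eventually_at_right_less[of "0::real"]
    by eventually_elim (simp add: zero_le_mult_iff)
  with right have "0 \<le> f 0"
    by (rule tendsto_lowerbound) simp
  moreover have "\<forall>\<^sub>F t in at_left (0::real). t < 0"
    by (simp add: eventually_at_filter)
  with eventually_at_split[THEN iffD1, OF sign, THEN conjunct1] have "\<forall>\<^sub>F t in at_left 0. f t \<le> 0"
    by eventually_elim (simp add: zero_le_mult_iff)
  with left have "f 0 \<le> 0"
    by (rule tendsto_upperbound) simp
  ultimately show ?thesis
    by simp
qed

lemma isCont_eventually_nhds_near:
  fixes f :: "'a::t2_space \<Rightarrow> real"
  assumes "isCont f x" "e > 0"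
  shows "\<forall>\<^sub>F z in nhds x. \<bar>f z - f x\<bar> < e"
  using tendstoD[OF assms(1)[unfolded isCont_def tendsto_at_iff_tendsto_nhds] assms(2)]
  by (simp add: dist_real_def)

lemma eventually_nhds_segment_fst:
  fixes \<alpha> :: "'a::metric_space \<Rightarrow> real"
  assumes P: "\<forall>\<^sub>F z in nhds (0, y0). P z" and \<alpha>: "isCont \<alpha> y0" "\<alpha> y0 = 0"
  shows "\<forall>\<^sub>F y in nhds y0. \<forall>t\<in>{- \<alpha> y..0}. P (t, y)"
proof -
  obtain d where d: "d > 0" "\<And>z. dist z (0, y0) < d \<Longrightarrow> P z"
    using P unfolding eventually_nhds_metric by blast
  have "\<forall>\<^sub>F y in nhds y0. dist y y0 < d/2"
    unfolding eventually_nhds_metric using d(1) by (intro exI[of _ "d/2"]) auto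
  moreover have "\<forall>\<^sub>F y in nhds y0. \<bar>\<alpha> y\<bar> < d/2"
    using isCont_eventually_nhds_near[OF \<alpha>(1), of "d/2"] \<alpha>(2) d(1) by simp
  ultimately show ?thesis
  proof eventually_elim
    case (elim y)
    show ?case
    proof
      fix t assume "t \<in> {- \<alpha> y..0}"
      then have "dist t 0 < d/2"
        using elim by (simp add: dist_real_def)
      have "dist (t, y) (0, y0) \<le> \<bar>dist t 0\<bar> + \<bar>dist y y0\<bar>"
        unfolding dist_Pair_Pair by (rule sqrt_sum_squares_le_sum_abs)
      then have "dist (t, y) (0, y0) < d"
        using elim \<open>dist t 0 < d/2\<close> by simp
      then show "P (t, y)"
        by (rule d(2))
    qed
  qed
qed

lemma discriminant_leading_coeff:
  fixes b e1 e2 :: "real \<Rightarrow> 'a::t2_space \<Rightarrow> real"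
  assumes W: "open W" "(0, y) \<in> W"
    and cont: "isCont (\<lambda>(t, y). e1 t y) (0, y)" "isCont (\<lambda>(t, y). e2 t y) (0, y)"
    and disc: "\<And>t. (t, y) \<in> W \<Longrightarrow> (4 * (e1 t y)^3 - e2 t y) * t^3 = 27 * (b t y)^2"
  shows "4 * (e1 0 y)^3 = e2 0 y"
proof -
  have "isCont (\<lambda>(t, y). 4 * (e1 t y)^3 - e2 t y) (0, y)"
    using cont by (auto intro!: continuous_intros simp: case_prod_beta')
  from isCont_o2[where f = "\<lambda>t. (t, y)" and a = 0, OF _ this]
  have "isCont (\<lambda>t. 4 * (e1 t y)^3 - e2 t y) 0"
    by simp
  moreover have "\<forall>\<^sub>F t in at 0. (t, y) \<in> W"
    using W by (intro topological_tendstoD) (auto intro!: tendsto_eq_intros)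
  then have "\<forall>\<^sub>F t in at 0. 0 \<le> (4 * (e1 t y)^3 - e2 t y) * t^3"
    by eventually_elim (simp add: disc)
  ultimately have "4 * (e1 0 y)^3 - e2 0 y = 0"
    by (rule isCont_vanishes_if_nonneg_mult_cube)
  then show ?thesis
    by simp
qed

lemma discriminant_bounds_near:
  fixes b'' e1 e2 :: "real \<Rightarrow> 'a::metric_space \<Rightarrow> real" and \<alpha> :: "'a \<Rightarrow> real"
  assumes W: "open W" "(0, y0) \<in> W"
    and cont: "isCont (\<lambda>(t, y). b'' t y) (0, y0)" "isCont (\<lambda>(t, y). e1 t y) (0, y0)"
      "isCont (\<lambda>(t, y). e2 t y) (0, y0)" "isCont \<alpha> y0"
    and \<alpha>0: "\<alpha> y0 = 0" and E: "e2 0 y0 > 0" and lead: "4 * (e1 0 y0)^3 = e2 0 y0"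
  obtains U M where "open U" "y0 \<in> U" "\<And>y. y \<in> U \<Longrightarrow> 4 * M^2 * \<alpha> y < e2 0 y0"
    "\<And>y t. y \<in> U \<Longrightarrow> - \<alpha> y \<le> t \<Longrightarrow> t \<le> 0 \<Longrightarrow> (t, y) \<in> W \<and> \<bar>b'' t y\<bar> \<le> M \<and>
      \<bar>(e1 t y)^3 - e2 0 y0 / 4\<bar> \<le> e2 0 y0 / 80 \<and> \<bar>e2 t y - e2 0 y0\<bar> \<le> e2 0 y0 / 20"
proof -
  define E where "E = e2 0 y0"
  define M where "M = \<bar>b'' 0 y0\<bar> + 1"
  have "\<forall>\<^sub>F z in nhds (0, y0). z \<in> W \<and> \<bar>b'' (fst z) (snd z)\<bar> \<le> M \<and>
      \<bar>(e1 (fst z) (snd z))^3 - E/4\<bar> \<le> E/80 \<and> \<bar>e2 (fst z) (snd z) - E\<bar> \<le> E/20"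
  proof -
    have e1_cube: "isCont (\<lambda>z. (case z of (t, y) \<Rightarrow> e1 t y)^3) (0, y0)"
      using cont(2) by (intro continuous_intros)
    have E_pos: "E/80 > 0" "E/20 > 0"
      using E by (simp_all add: E_def)
    have lead': "(e1 0 y0)^3 = E/4"
      using lead by (simp add: E_def)
    from isCont_eventually_nhds_near[OF e1_cube E_pos(1)]
      isCont_eventually_nhds_near[OF cont(3) E_pos(2)]
      isCont_eventually_nhds_near[OF cont(1) zero_less_one]
      eventually_nhds_in_open[OF W]
    show ?thesis
      by eventually_elim (auto simp: case_prod_beta' M_def lead' E_def [symmetric])
  qed
  then have "\<forall>\<^sub>F y in nhds y0. \<forall>t\<in>{- \<alpha> y..0}. (t, y) \<in> W \<and> \<bar>b'' t y\<bar> \<le> M \<and>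
      \<bar>(e1 t y)^3 - E/4\<bar> \<le> E/80 \<and> \<bar>e2 t y - E\<bar> \<le> E/20"
    using eventually_nhds_segment_fst[where P = "\<lambda>z. z \<in> W \<and> \<bar>b'' (fst z) (snd z)\<bar> \<le> M \<and>
      \<bar>(e1 (fst z) (snd z))^3 - E/4\<bar> \<le> E/80 \<and> \<bar>e2 (fst z) (snd z) - E\<bar> \<le> E/20", OF _ cont(4) \<alpha>0]
    by simp
  moreover have "\<forall>\<^sub>F y in nhds y0. 4 * M^2 * \<alpha> y < E"
  proof -
    have M2: "4 * M^2 > 0"
      by (simp add: M_def add_pos_nonneg)
    have "(\<alpha> \<longlongrightarrow> \<alpha> y0) (nhds y0)"
      using cont(4) unfolding isCont_def tendsto_at_iff_tendsto_nhds .
    moreover have "\<alpha> y0 < E / (4 * M^2)"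
      using divide_pos_pos[OF E M2] \<alpha>0 by (simp add: E_def)
    ultimately have "\<forall>\<^sub>F y in nhds y0. \<alpha> y < E / (4 * M^2)"
      by (rule order_tendstoD(2))
    then show ?thesis
      by eventually_elim (use M2 in \<open>simp add: pos_less_divide_eq mult.commute\<close>)
  qed
  ultimately have "\<forall>\<^sub>F y in nhds y0. (\<forall>t\<in>{- \<alpha> y..0}. (t, y) \<in> W \<and> \<bar>b'' t y\<bar> \<le> M \<and>
      \<bar>(e1 t y)^3 - E/4\<bar> \<le> E/80 \<and> \<bar>e2 t y - E\<bar> \<le> E/20) \<and> 4 * M^2 * \<alpha> y < E"
    by (rule eventually_conj)
  then obtain U where "open U" "y0 \<in> U" and "\<forall>y\<in>U. (\<forall>t\<in>{- \<alpha> y..0}. (t, y) \<in> W \<and>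
      \<bar>b'' t y\<bar> \<le> M \<and> \<bar>(e1 t y)^3 - E/4\<bar> \<le> E/80 \<and> \<bar>e2 t y - E\<bar> \<le> E/20) \<and> 4 * M^2 * \<alpha> y < E"
    unfolding eventually_nhds by blast
  then show thesis
    by (intro that[of U M]) (auto simp: E_def)
qed

lemma large_root_near:
  fixes b b' b'' e1 e2 :: "real \<Rightarrow> 'a::metric_space \<Rightarrow> real" and \<alpha> a1 a2 a3 :: "'a \<Rightarrow> real"
  assumes W: "open W" "(0, y0) \<in> W"
    and b': "\<And>t y. (t, y) \<in> W \<Longrightarrow> ((\<lambda>s. b s y) has_real_derivative b' t y) (at t)"
    and b'': "\<And>t y. (t, y) \<in> W \<Longrightarrow> ((\<lambda>s. b' s y) has_real_derivative b'' t y) (at t)"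
    and cont: "isCont (\<lambda>(t, y). b'' t y) (0, y0)" "isCont (\<lambda>(t, y). e1 t y) (0, y0)"
      "isCont (\<lambda>(t, y). e2 t y) (0, y0)" "isCont \<alpha> y0"
    and \<alpha>0: "\<alpha> y0 = 0" and E: "e2 0 y0 > 0" and lead: "4 * (e1 0 y0)^3 = e2 0 y0"
    and disc: "\<And>t y. (t, y) \<in> W \<Longrightarrow>
      27 * (b t y)^2 = 4 * (e1 t y)^3 * (t + \<alpha> y)^3 - e2 t y * (t^3 + (a1 y * t^2 + a2 y * t + a3 y))"
  shows "\<exists>U. open U \<and> y0 \<in> U \<and> (\<forall>y\<in>U. \<exists>\<nu>::complex.
    \<nu>^3 + of_real (a1 y) * \<nu>^2 + of_real (a2 y) * \<nu> + of_real (a3 y) = 0 \<and> \<alpha> y \<le> 1000 * cmod \<nu>)"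
proof -
  obtain M U where U: "open U" "y0 \<in> U" and small: "\<And>y. y \<in> U \<Longrightarrow> 4 * M^2 * \<alpha> y < e2 0 y0"
    and near: "\<And>y t. y \<in> U \<Longrightarrow> - \<alpha> y \<le> t \<Longrightarrow> t \<le> 0 \<Longrightarrow> (t, y) \<in> W \<and> \<bar>b'' t y\<bar> \<le> M \<and>
      \<bar>(e1 t y)^3 - e2 0 y0 / 4\<bar> \<le> e2 0 y0 / 80 \<and> \<bar>e2 t y - e2 0 y0\<bar> \<le> e2 0 y0 / 20"
    using discriminant_bounds_near[OF W cont \<alpha>0 E lead] by metis
  have "\<exists>\<nu>::complex. \<nu>^3 + of_real (a1 y) * \<nu>^2 + of_real (a2 y) * \<nu> + of_real (a3 y) = 0 \<and>
    \<alpha> y \<le> 1000 * cmod \<nu>" if "y \<in> U" for y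
  proof (rule discriminant_forces_large_root[where \<beta> = "\<lambda>t. b t y" and \<beta>' = "\<lambda>t. b' t y"
        and \<beta>'' = "\<lambda>t. b'' t y" and P = "\<lambda>t. (e1 t y)^3" and Q = "\<lambda>t. e2 t y"])
    show "e2 0 y0 > 0" "4 * M^2 * \<alpha> y < e2 0 y0"
      using E small[OF that] by simp_all
    fix t assume "- \<alpha> y \<le> t" "t \<le> 0"
    note t = near[OF that this]
    show "((\<lambda>t. b t y) has_real_derivative b' t y) (at t)"
      using b' t by blast
    show "((\<lambda>t. b' t y) has_real_derivative b'' t y) (at t)"
      using b'' t by blast
    show "\<bar>b'' t y\<bar> \<le> M" "\<bar>(e1 t y)^3 - e2 0 y0 / 4\<bar> \<le> e2 0 y0 / 80" "\<bar>e2 t y - e2 0 y0\<bar> \<le> e2 0 y0 / 20"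
      using t by simp_all
    show "27 * (b t y)^2 = 4 * (e1 t y)^3 * (t + \<alpha> y)^3 - e2 t y * (t^3 + (a1 y * t^2 + a2 y * t + a3 y))"
      using disc t by blast
  qed
  then show ?thesis
    using U by blast
qed

theorem lemma4p2:
  fixes a b e1 e2 :: "real \<Rightarrow> real ^ 'n \<Rightarrow> real"
    and \<alpha> a1 a2 a3 :: "real ^ 'n \<Rightarrow> real"
    and c T :: real and \<xi>0 :: "real ^ 'n"
    and W :: "(real \<times> (real ^ 'n)) set" and V :: "(real ^ 'n) set"
  assumes cT: "c > 0" "T > 0"
    and a_smooth: "C_inf_on ({-c<..<T} \<times> (UNIV - {0})) (\<lambda>(t, \<xi>). a t \<xi>)"
    and b_smooth: "C_inf_on ({-c<..<T} \<times> (UNIV - {0})) (\<lambda>(t, \<xi>). b t \<xi>)"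
    and a_hom: "\<And>t \<xi> s. t \<in> {-c<..<T} \<Longrightarrow> \<xi> \<noteq> 0 \<Longrightarrow> s > 0 \<Longrightarrow> a t (s *\<^sub>R \<xi>) = a t \<xi>"
    and b_hom: "\<And>t \<xi> s. t \<in> {-c<..<T} \<Longrightarrow> \<xi> \<noteq> 0 \<Longrightarrow> s > 0 \<Longrightarrow> b t (s *\<^sub>R \<xi>) = b t \<xi>"
    and Delta_nonneg: "\<And>t \<xi>. 0 \<le> t \<Longrightarrow> t < T \<Longrightarrow> \<xi> \<noteq> 0 \<Longrightarrow> 4 * (a t \<xi>)^3 - 27 * (b t \<xi>)^2 \<ge> 0"
    and xi0: "norm \<xi>0 = 1"
    and a0: "a 0 \<xi>0 = 0"
    and dta: "deriv (\<lambda>t. a t \<xi>0) 0 \<noteq> 0"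
    and W: "open W" "(0, \<xi>0) \<in> W" "W \<subseteq> {-c<..<T} \<times> (UNIV - {0})"
    and V: "open V" "\<xi>0 \<in> V"
    and e1: "C_inf_on W (\<lambda>(t, \<xi>). e1 t \<xi>)" "\<And>t \<xi>. (t, \<xi>) \<in> W \<Longrightarrow> e1 t \<xi> > 0"
    and e2: "C_inf_on W (\<lambda>(t, \<xi>). e2 t \<xi>)" "\<And>t \<xi>. (t, \<xi>) \<in> W \<Longrightarrow> e2 t \<xi> > 0"
    and \<alpha>: "C_inf_on V \<alpha>" "\<alpha> \<xi>0 = 0"
    and \<alpha>_nonneg: "\<exists>V'. open V' \<and> \<xi>0 \<in> V' \<and> (\<forall>\<xi>\<in>V'. \<alpha> \<xi> \<ge> 0)"
    and aj: "C_inf_on V a1" "C_inf_on V a2" "C_inf_on V a3"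
      "a1 \<xi>0 = 0" "a2 \<xi>0 = 0" "a3 \<xi>0 = 0"
    and a_fact: "\<And>t \<xi>. (t, \<xi>) \<in> W \<Longrightarrow> a t \<xi> = e1 t \<xi> * (t + \<alpha> \<xi>)"
    and Delta_fact: "\<And>t \<xi>. (t, \<xi>) \<in> W \<Longrightarrow>
       4 * (a t \<xi>)^3 - 27 * (b t \<xi>)^2 = e2 t \<xi> * (t^3 + a1 \<xi> * t^2 + a2 \<xi> * t + a3 \<xi>)"
  shows "\<exists>U \<epsilon>. open U \<and> \<xi>0 \<in> U \<and> \<epsilon> > 0 \<and>
           (\<forall>\<xi>\<in>U. \<exists>\<nu>::complex.
              \<nu>^3 + of_real (a1 \<xi>) * \<nu>^2 + of_real (a2 \<xi>) * \<nu> + of_real (a3 \<xi>) = 0 \<and>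
              cmod \<nu> / \<epsilon> \<ge> \<alpha> \<xi>)"
proof -
  obtain b' b'' where
    b': "\<And>t \<xi>. (t, \<xi>) \<in> W \<Longrightarrow> ((\<lambda>s. b s \<xi>) has_real_derivative b' t \<xi>) (at t)" and
    b'': "\<And>t \<xi>. (t, \<xi>) \<in> W \<Longrightarrow> ((\<lambda>s. b' s \<xi>) has_real_derivative b'' t \<xi>) (at t)" and
    b''_cont: "continuous_on W (\<lambda>(t, \<xi>). b'' t \<xi>)"
    using C_inf_on_second_partial_fst[OF C_inf_on_subset[OF b_smooth W(3)]] by blast
  have cont: "isCont (\<lambda>(t, \<xi>). b'' t \<xi>) (0, \<xi>0)" "isCont (\<lambda>(t, \<xi>). e1 t \<xi>) (0, \<xi>0)"
    "isCont (\<lambda>(t, \<xi>). e2 t \<xi>) (0, \<xi>0)" "isCont \<alpha> \<xi>0"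
    using W V b''_cont C_inf_on_imp_continuous_on[OF e1(1)] C_inf_on_imp_continuous_on[OF e2(1)]
      C_inf_on_imp_continuous_on[OF \<alpha>(1)] by (simp_all add: continuous_on_eq_continuous_at)
  have disc: "27 * (b t \<xi>)^2 = 4 * (e1 t \<xi>)^3 * (t + \<alpha> \<xi>)^3 - e2 t \<xi> * (t^3 + (a1 \<xi> * t^2 + a2 \<xi> * t + a3 \<xi>))"
    if "(t, \<xi>) \<in> W" for t \<xi>
    using a_fact[OF that] Delta_fact[OF that] by (simp add: power_mult_distrib add.assoc)
  have lead: "4 * (e1 0 \<xi>0)^3 = e2 0 \<xi>0"
  proof (rule discriminant_leading_coeff[OF W(1,2) cont(2,3)])
    show "(4 * (e1 t \<xi>0)^3 - e2 t \<xi>0) * t^3 = 27 * (b t \<xi>0)^2" if "(t, \<xi>0) \<in> W" for t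
      using disc[OF that] \<alpha>(2) aj(4-6) by (simp add: algebra_simps)
  qed
  obtain U where "open U" "\<xi>0 \<in> U" and "\<forall>\<xi>\<in>U. \<exists>\<nu>::complex.
    \<nu>^3 + of_real (a1 \<xi>) * \<nu>^2 + of_real (a2 \<xi>) * \<nu> + of_real (a3 \<xi>) = 0 \<and> \<alpha> \<xi> \<le> 1000 * cmod \<nu>"
    using large_root_near[OF W(1,2) b' b'' cont \<alpha>(2) e2(2)[OF W(2)] lead disc] by blast
  then show ?thesis
    by (intro exI[of _ U] exI[of _ "1/1000::real"]) (auto simp: mult.commute[of 1000])
qed

end
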